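(* Let $\Omega\subset\{1,\dots,N\}$ have cardinality $n$, let $0<\epsilon<1$, $\delta>0$, $s\in\mathbb{N}$, and let $b\in\mathbb{R}^N$, $c\in\mathbb{R}^{2N-1}$ be random vectors with independent Bernoulli $\pm1$ entries. Let $\delta_s$ denote the restricted isometry constant of order $s$ of either $\frac1{\sqrt n}S^b_\Omega$ or $\frac1{\sqrt n}T^c_\Omega$. Assume $$ n\ge 16\,\delta^{-2}s^2\log^2(2N^2/\epsilon).$$ Then with probability at least $1-\epsilon$ it holds $\delta_s\le\delta$.
   Context: For $b=(b_0,\dots,b_{N-1})\in\mathbb{R}^N$ the circulant matrix $S^b\in\mathbb{R}^{N\times N}$ has entries $S^b_{i,j}=b_{(j-i)\bmod N}$, $i,j=1,\dots,N$. For $c=(c_{-N+1},\dots,c_{N-1})\in\mathbb{R}^{2N-1}$ the Toeplitz matrix $T^c\in\mathbb{R}^{N\times N}$ has entries $T^c_{i,j}=c_{j-i}$. $S^b_\Omega$ (resp. $T^c_\Omega$) is the submatrix consisting of the rows indexed by $\Omega$. A Bernoulli $\pm1$ variable takes values $\pm1$ with probability $1/2$ each. The restricted isometry constant $\delta_s$ of a matrix $A$ is the smallest $\delta\ge0$ such that $(1-\delta)\|x\|_2^2\le\|Ax\|_2^2\le(1+\delta)\|x\|_2^2$ for all $x$ with at most $s$ non-zero entries. *)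

theory Defs
  imports "HOL-Probability.Probability"
begin

text \<open>Matrices are functions on row/column indices; rows and columns use the
paper's indices 1..N.\<close>

definition circulant :: "nat \<Rightarrow> (nat \<Rightarrow> real) \<Rightarrow> nat \<Rightarrow> nat \<Rightarrow> real" where
  "circulant N b i j = b (nat ((int j - int i) mod int N))"

text \<open>Toeplitz matrix: T^c(i,j) = c(j - i), with c indexed by -N+1..N-1.\<close>
definition toeplitz :: "(int \<Rightarrow> real) \<Rightarrow> nat \<Rightarrow> nat \<Rightarrow> real" where
  "toeplitz c i j = c (int j - int i)"

text \<open>Restricted isometry constant of order s of the row-submatrix A_Omega
(rows in Omega, columns 1..N).\<close>
definition RIC :: "nat \<Rightarrow> nat set \<Rightarrow> (nat \<Rightarrow> nat \<Rightarrow> real) \<Rightarrow> nat \<Rightarrow> real" where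
  "RIC N \<Omega> A s = Inf {d. d \<ge> 0 \<and>
     (\<forall>x :: nat \<Rightarrow> real. card {j\<in>{1..N}. x j \<noteq> 0} \<le> s \<longrightarrow>
        (1 - d) * (\<Sum>j=1..N. (x j)\<^sup>2) \<le> (\<Sum>i\<in>\<Omega>. (\<Sum>j=1..N. A i j * x j)\<^sup>2) \<and>
        (\<Sum>i\<in>\<Omega>. (\<Sum>j=1..N. A i j * x j)\<^sup>2) \<le> (1 + d) * (\<Sum>j=1..N. (x j)\<^sup>2))}"

text \<open>Independent Bernoulli +-1 entries on an index set (default value 0 outside).\<close>
definition bernoulli_vec :: "'a set \<Rightarrow> ('a \<Rightarrow> real) pmf" where
  "bernoulli_vec I = Pi_pmf I 0 (\<lambda>_. pmf_of_set {-1, 1})"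

end

theory Submission
  imports Defs
begin

text \<open>With unit-norm columns, the restricted isometry constant of order \<open>s\<close> is at most
  \<open>s\<close> times the largest inner product of two distinct columns (a Gershgorin bound on the
  Gram matrix). After reindexing, the inner product of two columns of \<open>S\<^sup>b\<^sub>\<Omega>\<close>
  or \<open>T\<^sup>c\<^sub>\<Omega>\<close> is a sum (two sums for the circulant, split at the wrap-around)
  of at most \<open>n\<close> products of Bernoulli variables, ordered so that each product contains a
  variable not seen before. Integrating these variables out one at a time bounds the moment
  generating function by \<open>cosh \<lambda> ^ n \<le> exp (n \<lambda>\<^sup>2 / 2)\<close>, and the Chernoff bound gives
  the tail \<open>2 exp (- t\<^sup>2 / (2 n))\<close>. A union bound over the pairs of columns and the
  sample-size hypothesis complete the proof.\<close>

lemma nn_integral_rademacher_exp: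
  "(\<integral>\<^sup>+y. ennreal (exp (a * y)) * C \<partial>measure_pmf (pmf_of_set {-1, 1::real}))
     = ennreal (cosh a) * C"
proof -
  have "(\<integral>\<^sup>+y. ennreal (exp (a * y)) * C \<partial>measure_pmf (pmf_of_set {-1, 1::real}))
      = (ennreal (exp (-a)) * C + ennreal (exp a) * C) / 2"
    by (subst nn_integral_pmf_of_set) auto
  also have "\<dots> = (ennreal (exp (-a)) + ennreal (exp a)) * C / 2"
    by (simp only: distrib_right)
  also have "\<dots> = (ennreal (exp (-a)) + ennreal (exp a)) / 2 * C"
    by (simp only: ennreal_divide_times ennreal_times_divide)
  also have "(ennreal (exp (-a)) + ennreal (exp a)) / 2 = ennreal (cosh a)"
    by (simp add: cosh_def ennreal_plus[symmetric] ennreal_divide_numeral add.commute del: ennreal_plus)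
  finally show ?thesis .
qed

lemma cosh_le_exp_half_square: "cosh (a::real) \<le> exp (a\<^sup>2 / 2)"
proof -
  have pos: "cosh a \<le> exp (a\<^sup>2 / 2)" if "a > 0" for a :: real
  proof -
    interpret interval_bounded_random_variable
      "measure_pmf (pmf_of_set {-1, 1::real})" "\<lambda>x. x" "-1" "1"
      by unfold_locales (auto simp: AE_measure_pmf_iff)
    have "measure_pmf.expectation (pmf_of_set {-1, 1::real}) (\<lambda>x. x) = 0"
      by (subst integral_pmf_of_set) auto
    then have "(\<integral>\<^sup>+x. ennreal (exp (a * x)) \<partial>measure_pmf (pmf_of_set {-1, 1::real}))
               \<le> ennreal (exp (a\<^sup>2 * (1 - -1)\<^sup>2 / 8))"
      by (rule Hoeffdings_lemma_nn_integral_0[OF that])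
    then show ?thesis
      using nn_integral_rademacher_exp[of a 1] by (simp add: power2_eq_square)
  qed
  show ?thesis
  proof (cases a "0::real" rule: linorder_cases)
    case less
    then show ?thesis using pos[of "-a"] by simp
  qed (use pos in auto)
qed

lemma bernoulli_vec_sign:
  assumes "finite I" "b \<in> set_pmf (bernoulli_vec I)" "x \<in> I"
  shows "b x \<in> {-1, 1}"
  using set_Pi_pmf_subset'[of I 0 "\<lambda>_. pmf_of_set {-1, 1::real}"] assms
  unfolding bernoulli_vec_def by (auto simp: PiE_dflt_def)

lemma bernoulli_vec_abs_le_1:
  assumes "finite I" "b \<in> set_pmf (bernoulli_vec I)"
  shows "\<bar>b x\<bar> \<le> 1"
proof (cases "x \<in> I")
  case False
  then show ?thesis
    using set_Pi_pmf_subset'[of I 0 "\<lambda>_. pmf_of_set {-1, 1::real}"] assms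
    unfolding bernoulli_vec_def by (auto simp: PiE_dflt_def)
qed (use bernoulli_vec_sign[OF assms] in fastforce)

lemma bernoulli_vec_remove:
  assumes "finite I" "x \<in> I"
  shows "bernoulli_vec I = map_pmf (\<lambda>(f, y). f(x := y))
           (pair_pmf (bernoulli_vec (I - {x})) (pmf_of_set {-1, 1}))"
proof -
  have "bernoulli_vec I = map_pmf (\<lambda>(y, f). f(x := y))
          (pair_pmf (pmf_of_set {-1, 1}) (bernoulli_vec (I - {x})))"
    unfolding bernoulli_vec_def
    using Pi_pmf_insert[of "I - {x}" x 0 "\<lambda>_. pmf_of_set {-1, 1::real}"] assms
    by (simp add: insert_absorb)
  also have "\<dots> = map_pmf (\<lambda>(f, y). f(x := y))
                    (pair_pmf (bernoulli_vec (I - {x})) (pmf_of_set {-1, 1}))"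
    by (subst pair_commute_pmf) (simp add: map_pmf_comp case_prod_beta')
  finally show ?thesis .
qed

lemma nn_integral_exp_rademacher_product_le:
  fixes F :: "('a \<Rightarrow> real) \<Rightarrow> ennreal"
  assumes I: "finite I" "x \<in> I" and "u \<noteq> x" and F: "\<And>b y. F (b(x := y)) = F b"
  shows "(\<integral>\<^sup>+b. ennreal (exp (l * (b u * b x))) * F b \<partial>bernoulli_vec I)
           \<le> ennreal (cosh l) * (\<integral>\<^sup>+b. F b \<partial>bernoulli_vec I)"
proof -
  let ?Q = "bernoulli_vec (I - {x})"
  have "(\<integral>\<^sup>+b. ennreal (exp (l * (b u * b x))) * F b \<partial>bernoulli_vec I)
      = (\<integral>\<^sup>+f. \<integral>\<^sup>+y. ennreal (exp (l * f u * y)) * F f \<partial>pmf_of_set {-1, 1} \<partial>?Q)"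
    using \<open>u \<noteq> x\<close>
    by (subst bernoulli_vec_remove[OF I]) (simp add: nn_integral_pair_pmf' F mult.assoc)
  also have "\<dots> = (\<integral>\<^sup>+f. ennreal (cosh (l * f u)) * F f \<partial>?Q)"
    by (simp add: nn_integral_rademacher_exp)
  also have "\<dots> \<le> (\<integral>\<^sup>+f. ennreal (cosh l) * F f \<partial>?Q)"
  proof (rule nn_integral_mono_AE, unfold AE_measure_pmf_iff, intro ballI)
    fix f assume "f \<in> set_pmf ?Q"
    then have "\<bar>l * f u\<bar> \<le> \<bar>l\<bar>"
      using bernoulli_vec_abs_le_1[of "I - {x}" f u] I by (simp add: abs_mult mult_left_le)
    then have "cosh (l * f u) \<le> cosh l"
      by (metis abs_ge_zero cosh_real_abs cosh_real_nonneg_le_iff)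
    then show "ennreal (cosh (l * f u)) * F f \<le> ennreal (cosh l) * F f"
      by (intro mult_right_mono) auto
  qed
  also have "\<dots> = ennreal (cosh l) * (\<integral>\<^sup>+b. F b \<partial>bernoulli_vec I)"
    by (simp add: nn_integral_cmult bernoulli_vec_remove[OF I] nn_integral_pair_pmf' F
                  measure_pmf.emeasure_space_1)
  finally show ?thesis .
qed

text \<open>The ordering hypothesis says that every term brings a fresh variable \<open>b (q e)\<close>;
  such a chaos has moment generating function at most that of a sum of \<open>card E\<close>
  independent signs.\<close>
lemma nn_integral_exp_chaos_le:
  fixes E :: "'e::linorder set" and p q :: "'e \<Rightarrow> 'a"
  assumes "finite I" "finite E" "q ` E \<subseteq> I"
    and "\<forall>e\<in>E. \<forall>e'\<in>E. e' < e \<longrightarrow> p e' \<noteq> q e \<and> q e' \<noteq> q e"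
    and "\<forall>e\<in>E. p e \<noteq> q e"
  shows "(\<integral>\<^sup>+b. ennreal (exp (l * (\<Sum>e\<in>E. b (p e) * b (q e)))) \<partial>bernoulli_vec I)
           \<le> ennreal (cosh l ^ card E)"
  using assms(2-)
proof (induction E rule: finite_linorder_max_induct)
  case empty
  then show ?case by (simp add: measure_pmf.emeasure_space_1)
next
  case (insert e A)
  have "e \<notin> A" using insert.hyps(2) by auto
  let ?F = "\<lambda>b. ennreal (exp (l * (\<Sum>e\<in>A. b (p e) * b (q e))))"
  have F_indep: "\<And>b y. ?F (b(q e := y)) = ?F b"
    using insert.prems(2) insert.hyps(2) by (auto intro!: sum.cong arg_cong[where f = exp])
  have "(\<integral>\<^sup>+b. ennreal (exp (l * (\<Sum>e\<in>insert e A. b (p e) * b (q e)))) \<partial>bernoulli_vec I)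
      = (\<integral>\<^sup>+b. ennreal (exp (l * (b (p e) * b (q e)))) * ?F b \<partial>bernoulli_vec I)"
    using insert.hyps(1) \<open>e \<notin> A\<close> by (simp add: distrib_left exp_add ennreal_mult')
  also from F_indep
  have "\<dots> \<le> ennreal (cosh l) * (\<integral>\<^sup>+b. ?F b \<partial>bernoulli_vec I)"
    by (intro nn_integral_exp_rademacher_product_le \<open>finite I\<close>) (use insert.prems in auto)
  also have "\<dots> \<le> ennreal (cosh l) * ennreal (cosh l ^ card A)"
    by (intro mult_left_mono insert.IH) (use insert.prems in auto)
  also have "\<dots> = ennreal (cosh l ^ card (insert e A))"
    using insert.hyps(1) \<open>e \<notin> A\<close> by (simp add: ennreal_mult'[symmetric])
  finally show ?case .
qed

lemma prob_signed_chaos_ge: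
  fixes E :: "'e::linorder set" and p q :: "'e \<Rightarrow> 'a"
  assumes "finite I" "finite E" "q ` E \<subseteq> I"
    and "\<forall>e\<in>E. \<forall>e'\<in>E. e' < e \<longrightarrow> p e' \<noteq> q e \<and> q e' \<noteq> q e"
    and "\<forall>e\<in>E. p e \<noteq> q e"
    and "card E \<le> n" "0 < n" "0 < t" "\<sigma> \<in> {-1, 1}"
  shows "measure_pmf.prob (bernoulli_vec I) {b. t \<le> \<sigma> * (\<Sum>e\<in>E. b (p e) * b (q e))}
           \<le> exp (- t\<^sup>2 / (2 * n))"
proof -
  let ?M = "bernoulli_vec I"
  define S where "S b = \<sigma> * (\<Sum>e\<in>E. b (p e) * b (q e))" for b :: "'a \<Rightarrow> real"
  define l where "l = t / n"
  have "l > 0" using assms by (simp add: l_def)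
  have "cosh (l * \<sigma>) = cosh l"
    using \<open>\<sigma> \<in> {-1, 1}\<close> by auto
  then have "cosh (l * \<sigma>) ^ card E \<le> exp (l\<^sup>2 / 2) ^ card E"
    by (metis power_mono cosh_le_exp_half_square cosh_real_nonneg)
  also have "\<dots> \<le> exp (l\<^sup>2 / 2) ^ n"
    using assms(6) by (intro power_increasing) auto
  finally have mgf: "(\<integral>\<^sup>+b. ennreal (exp (l * S b)) * indicator (space ?M) b \<partial>?M)
                       \<le> ennreal (exp (l\<^sup>2 / 2) ^ n)"
    using nn_integral_exp_chaos_le[OF assms(1-5), of "l * \<sigma>"]
    by (simp add: S_def mult.assoc order_trans)
  have "emeasure ?M {b \<in> space ?M. t \<le> S b}
          \<le> ennreal (exp (- l * t)) * (\<integral>\<^sup>+b. ennreal (exp (l * S b)) * indicator (space ?M) b \<partial>?M)"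
    using \<open>l > 0\<close> by (intro Chernoff_ineq_nn_integral_ge) auto
  also have "\<dots> \<le> ennreal (exp (- l * t)) * ennreal (exp (l\<^sup>2 / 2) ^ n)"
    using mgf by (rule mult_left_mono) simp
  also have "\<dots> = ennreal (exp (- t\<^sup>2 / (2 * n)))"
  proof -
    have "- l * t + n * (l\<^sup>2 / 2) = - t\<^sup>2 / (2 * n)"
      using assms(7) by (simp add: l_def field_simps power2_eq_square)
    then show ?thesis
      by (simp add: ennreal_mult'[symmetric] exp_of_nat_mult[symmetric] exp_add[symmetric])
  qed
  finally show ?thesis
    by (simp add: S_def measure_pmf.emeasure_eq_measure ennreal_le_iff)
qed

lemma prob_abs_chaos_ge:
  fixes E :: "'e::linorder set" and p q :: "'e \<Rightarrow> 'a"
  assumes "finite I" "finite E" "q ` E \<subseteq> I"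
    and "\<forall>e\<in>E. \<forall>e'\<in>E. e' < e \<longrightarrow> p e' \<noteq> q e \<and> q e' \<noteq> q e"
    and "\<forall>e\<in>E. p e \<noteq> q e"
    and "card E \<le> n" "0 < n" "0 < t"
  shows "measure_pmf.prob (bernoulli_vec I) {b. t \<le> \<bar>\<Sum>e\<in>E. b (p e) * b (q e)\<bar>}
           \<le> 2 * exp (- t\<^sup>2 / (2 * n))"
proof -
  let ?M = "bernoulli_vec I" and ?S = "\<lambda>b. \<Sum>e\<in>E. b (p e) * b (q e)"
  have "{b. t \<le> \<bar>?S b\<bar>} = {b. t \<le> 1 * ?S b} \<union> {b. t \<le> -1 * ?S b}"
    by auto
  then have "measure_pmf.prob ?M {b. t \<le> \<bar>?S b\<bar>}
               \<le> measure_pmf.prob ?M {b. t \<le> 1 * ?S b} + measure_pmf.prob ?M {b. t \<le> -1 * ?S b}"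
    by (simp add: measure_Un_le)
  also have "\<dots> \<le> 2 * exp (- t\<^sup>2 / (2 * n))"
    using prob_signed_chaos_ge[OF assms, of 1] prob_signed_chaos_ge[OF assms, of "-1"] by simp
  finally show ?thesis .
qed

lemma RIC_le:
  fixes A :: "nat \<Rightarrow> nat \<Rightarrow> real"
  assumes "0 \<le> \<delta>"
    and "\<And>x. card {j\<in>{1..N}. x j \<noteq> 0} \<le> s \<Longrightarrow>
           \<bar>(\<Sum>i\<in>\<Omega>. (\<Sum>j=1..N. A i j * x j)\<^sup>2) - (\<Sum>j=1..N. (x j)\<^sup>2)\<bar> \<le> \<delta> * (\<Sum>j=1..N. (x j)\<^sup>2)"
  shows "RIC N \<Omega> A s \<le> \<delta>"
  unfolding RIC_def
  by (rule cInf_lower) (use assms in \<open>auto simp: abs_le_iff algebra_simps intro: bdd_belowI[of _ 0]\<close>)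

lemma RIC_le_degenerate:
  assumes "s = 0 \<or> N = 0" and "0 \<le> \<delta>"
  shows "RIC N \<Omega> A s \<le> \<delta>"
proof (rule RIC_le[OF \<open>0 \<le> \<delta>\<close>])
  fix x :: "nat \<Rightarrow> real"
  assume "card {j\<in>{1..N}. x j \<noteq> 0} \<le> s"
  with assms(1) have "\<forall>j\<in>{1..N}. x j = 0" by auto
  then show "\<bar>(\<Sum>i\<in>\<Omega>. (\<Sum>j=1..N. A i j * x j)\<^sup>2) - (\<Sum>j=1..N. (x j)\<^sup>2)\<bar> \<le> \<delta> * (\<Sum>j=1..N. (x j)\<^sup>2)"
    by simp
qed

lemma quadratic_form_near_identity:
  fixes G :: "'a \<Rightarrow> 'a \<Rightarrow> real"
  assumes "finite S" "0 \<le> \<mu>"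
    and "\<And>j. j \<in> S \<Longrightarrow> G j j = 1"
    and "\<And>j k. j \<in> S \<Longrightarrow> k \<in> S \<Longrightarrow> j \<noteq> k \<Longrightarrow> \<bar>G j k\<bar> \<le> \<mu>"
  shows "\<bar>(\<Sum>j\<in>S. \<Sum>k\<in>S. x j * x k * G j k) - (\<Sum>j\<in>S. (x j)\<^sup>2)\<bar> \<le> \<mu> * card S * (\<Sum>j\<in>S. (x j)\<^sup>2)"
proof -
  define H where "H j k = G j k - (if j = k then 1 else 0)" for j k
  have "(\<Sum>k\<in>S. x j * x k * H j k) = (\<Sum>k\<in>S. x j * x k * G j k) - (x j)\<^sup>2" if "j \<in> S" for j
  proof -
    have "(\<Sum>k\<in>S. x j * x k * (if j = k then 1 else 0)) = (\<Sum>k\<in>S. if j = k then x j * x k else 0)"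
      by (rule sum.cong) auto
    also have "\<dots> = (x j)\<^sup>2"
      using that \<open>finite S\<close> by (simp add: power2_eq_square)
    finally have "(\<Sum>k\<in>S. x j * x k * (if j = k then 1 else 0)) = (x j)\<^sup>2" .
    then show ?thesis
      by (simp add: H_def right_diff_distrib sum_subtractf)
  qed
  then have "(\<Sum>j\<in>S. \<Sum>k\<in>S. x j * x k * G j k) - (\<Sum>j\<in>S. (x j)\<^sup>2) = (\<Sum>j\<in>S. \<Sum>k\<in>S. x j * x k * H j k)"
    by (simp add: sum_subtractf)
  also have "\<bar>\<dots>\<bar> \<le> (\<Sum>j\<in>S. \<Sum>k\<in>S. \<bar>x j\<bar> * \<bar>x k\<bar> * \<mu>)"
    unfolding abs_mult[symmetric]
    by (rule order_trans[OF sum_abs], intro sum_mono order_trans[OF sum_abs])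
       (use assms in \<open>auto simp: H_def abs_mult intro: mult_left_mono\<close>)
  also have "\<dots> = \<mu> * (\<Sum>j\<in>S. \<bar>x j\<bar>)\<^sup>2"
    by (simp add: power2_eq_square sum_product sum_distrib_left ac_simps)
  also have "\<dots> \<le> \<mu> * ((\<Sum>j\<in>S. \<bar>x j\<bar>\<^sup>2) * card S)"
    using \<open>0 \<le> \<mu>\<close> by (intro mult_left_mono sum_squared_le_sum_of_squares)
  finally show ?thesis by (simp add: ac_simps)
qed

lemma RIC_le_of_coherence:
  fixes A :: "nat \<Rightarrow> nat \<Rightarrow> real"
  assumes "0 < s" "0 \<le> \<delta>"
    and unit_columns: "\<And>j. j \<in> {1..N} \<Longrightarrow> (\<Sum>i\<in>\<Omega>. (A i j)\<^sup>2) = 1"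
    and coherence: "\<And>j k. j \<in> {1..N} \<Longrightarrow> k \<in> {1..N} \<Longrightarrow> j \<noteq> k \<Longrightarrow>
                      s * \<bar>\<Sum>i\<in>\<Omega>. A i j * A i k\<bar> \<le> \<delta>"
  shows "RIC N \<Omega> A s \<le> \<delta>"
proof (rule RIC_le[OF \<open>0 \<le> \<delta>\<close>])
  fix x :: "nat \<Rightarrow> real"
  assume sparse: "card {j\<in>{1..N}. x j \<noteq> 0} \<le> s"
  define S where "S = {j\<in>{1..N}. x j \<noteq> 0}"
  define G where "G j k = (\<Sum>i\<in>\<Omega>. A i j * A i k)" for j k
  have "finite S" "S \<subseteq> {1..N}" by (auto simp: S_def)
  have restrict: "(\<Sum>j=1..N. f j * x j) = (\<Sum>j\<in>S. f j * x j)" for f :: "nat \<Rightarrow> real"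
    by (rule sum.mono_neutral_right) (auto simp: S_def)
  have norm: "(\<Sum>j=1..N. (x j)\<^sup>2) = (\<Sum>j\<in>S. (x j)\<^sup>2)"
    by (rule sum.mono_neutral_right) (auto simp: S_def)
  have "(\<Sum>i\<in>\<Omega>. (\<Sum>j=1..N. A i j * x j)\<^sup>2) = (\<Sum>i\<in>\<Omega>. \<Sum>j\<in>S. \<Sum>k\<in>S. x j * x k * (A i j * A i k))"
    unfolding restrict by (simp add: power2_eq_square sum_product ac_simps)
  also have "\<dots> = (\<Sum>j\<in>S. \<Sum>k\<in>S. x j * x k * G j k)"
    by (simp add: G_def sum_distrib_left sum.swap[of _ \<Omega>])
  finally have quadratic_form: "(\<Sum>i\<in>\<Omega>. (\<Sum>j=1..N. A i j * x j)\<^sup>2) = (\<Sum>j\<in>S. \<Sum>k\<in>S. x j * x k * G j k)" .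
  have "\<bar>(\<Sum>j\<in>S. \<Sum>k\<in>S. x j * x k * G j k) - (\<Sum>j\<in>S. (x j)\<^sup>2)\<bar> \<le> \<delta> / s * card S * (\<Sum>j\<in>S. (x j)\<^sup>2)"
  proof (rule quadratic_form_near_identity[OF \<open>finite S\<close>])
    show "G j j = 1" if "j \<in> S" for j
      using unit_columns[of j] that \<open>S \<subseteq> {1..N}\<close> by (auto simp: G_def power2_eq_square)
    show "\<bar>G j k\<bar> \<le> \<delta> / s" if "j \<in> S" "k \<in> S" "j \<noteq> k" for j k
      using coherence[of j k] that \<open>S \<subseteq> {1..N}\<close> \<open>0 < s\<close>
      by (auto simp: G_def pos_le_divide_eq mult.commute subset_iff)
  qed (use assms in auto)
  also have "\<dots> \<le> \<delta> * (\<Sum>j\<in>S. (x j)\<^sup>2)"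
  proof -
    have "\<delta> / s * card S \<le> \<delta>"
      using sparse \<open>0 < s\<close> \<open>0 \<le> \<delta>\<close> by (simp add: S_def field_simps mult_left_mono)
    then show ?thesis by (intro mult_right_mono) (auto intro: sum_nonneg)
  qed
  finally show "\<bar>(\<Sum>i\<in>\<Omega>. (\<Sum>j=1..N. A i j * x j)\<^sup>2) - (\<Sum>j=1..N. (x j)\<^sup>2)\<bar> \<le> \<delta> * (\<Sum>j=1..N. (x j)\<^sup>2)"
    by (simp only: quadratic_form norm)
qed

lemma RIC_normalized_le_of_coherence:
  fixes B :: "nat \<Rightarrow> nat \<Rightarrow> real" and n s :: nat and \<delta> :: real
  assumes "0 < s" "0 \<le> \<delta>" "0 < n"
    and columns: "\<And>j. j \<in> {1..N} \<Longrightarrow> (\<Sum>i\<in>\<Omega>. (B i j)\<^sup>2) = n"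
    and coherence: "\<And>j k. j \<in> {1..N} \<Longrightarrow> k \<in> {1..N} \<Longrightarrow> j < k \<Longrightarrow>
                      s * \<bar>\<Sum>i\<in>\<Omega>. B i j * B i k\<bar> \<le> \<delta> * n"
  shows "RIC N \<Omega> (\<lambda>i j. B i j / sqrt n) s \<le> \<delta>"
proof (rule RIC_le_of_coherence[OF \<open>0 < s\<close> \<open>0 \<le> \<delta>\<close>])
  have scale: "B i j / sqrt n * (B i k / sqrt n) = B i j * B i k / n" for i j k
    using \<open>0 < n\<close> by (simp add: field_simps)
  show "(\<Sum>i\<in>\<Omega>. (B i j / sqrt n)\<^sup>2) = 1" if "j \<in> {1..N}" for j
    using columns[OF that] \<open>0 < n\<close> by (simp add: power2_eq_square scale flip: sum_divide_distrib)
  have "s * \<bar>\<Sum>i\<in>\<Omega>. B i j * B i k\<bar> \<le> \<delta> * n"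
    if "j \<in> {1..N}" "k \<in> {1..N}" "j \<noteq> k" for j k
  proof (cases "j < k")
    case False
    then show ?thesis
      using coherence[of k j] that by (simp add: mult.commute)
  qed (use coherence that in blast)
  then show "s * \<bar>\<Sum>i\<in>\<Omega>. B i j / sqrt n * (B i k / sqrt n)\<bar> \<le> \<delta>"
    if "j \<in> {1..N}" "k \<in> {1..N}" "j \<noteq> k" for j k
    using that \<open>0 < n\<close> by (simp add: scale pos_divide_le_eq flip: sum_divide_distrib)
qed

lemma prob_RIC_normalized_ge:
  fixes M :: "'b pmf" and B :: "'b \<Rightarrow> nat \<Rightarrow> nat \<Rightarrow> real" and n s :: nat and \<delta> \<beta> :: real
  assumes "0 < s" "0 \<le> \<delta>" "0 < n" "0 \<le> \<beta>"
    and columns: "\<And>b j. b \<in> set_pmf M \<Longrightarrow> j \<in> {1..N} \<Longrightarrow> (\<Sum>i\<in>\<Omega>. (B b i j)\<^sup>2) = n"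
    and coherence_tail: "\<And>j k. j \<in> {1..N} \<Longrightarrow> k \<in> {1..N} \<Longrightarrow> j < k \<Longrightarrow>
           measure_pmf.prob M {b. \<delta> * n < s * \<bar>\<Sum>i\<in>\<Omega>. B b i j * B b i k\<bar>} \<le> \<beta>"
  shows "1 - real (N * (N - 1)) * \<beta> \<le> measure_pmf.prob M {b. RIC N \<Omega> (\<lambda>i j. B b i j / sqrt n) s \<le> \<delta>}"
proof -
  define P where "P = {(j, k). j \<in> {1..N} \<and> k \<in> {1..N} \<and> j < k}"
  define bad where "bad = (\<lambda>(j, k). {b. \<delta> * n < s * \<bar>\<Sum>i\<in>\<Omega>. B b i j * B b i k\<bar>})"
  have good: "RIC N \<Omega> (\<lambda>i j. B b i j / sqrt n) s \<le> \<delta>"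
    if "b \<in> set_pmf M" "b \<notin> \<Union> (bad ` P)" for b
  proof (rule RIC_normalized_le_of_coherence[OF \<open>0 < s\<close> \<open>0 \<le> \<delta>\<close> \<open>0 < n\<close> columns[OF that(1)]])
    fix j k assume "j \<in> {1..N}" "k \<in> {1..N}" "j < k"
    then have "b \<notin> bad (j, k)" using that(2) by (auto simp: P_def)
    then show "s * \<bar>\<Sum>i\<in>\<Omega>. B b i j * B b i k\<bar> \<le> \<delta> * n"
      by (simp add: bad_def not_less)
  qed
  have "P \<subseteq> {1..N} \<times> {2..N}" by (auto simp: P_def)
  then have "finite P" and "card P \<le> N * (N - 1)"
    using card_mono[of "{1..N} \<times> {2..N}" P] by (auto simp: card_cartesian_product finite_subset)
  have "measure_pmf.prob M (\<Union> (bad ` P)) \<le> (\<Sum>p\<in>P. measure_pmf.prob M (bad p))"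
    using \<open>finite P\<close> by (rule measure_pmf.finite_measure_subadditive_finite) auto
  also have "\<dots> \<le> card P * \<beta>"
    using coherence_tail by (intro sum_bounded_above) (auto simp: P_def bad_def)
  also have "\<dots> \<le> real (N * (N - 1)) * \<beta>"
    using \<open>card P \<le> N * (N - 1)\<close> \<open>0 \<le> \<beta>\<close> by (intro mult_right_mono of_nat_mono)
  finally have "1 - real (N * (N - 1)) * \<beta> \<le> measure_pmf.prob M (UNIV - \<Union> (bad ` P))"
    using measure_pmf.prob_compl[of "\<Union> (bad ` P)"] by simp
  also have "\<dots> \<le> measure_pmf.prob M {b. RIC N \<Omega> (\<lambda>i j. B b i j / sqrt n) s \<le> \<delta>}"
    using good by (intro measure_pmf.finite_measure_mono_AE) (auto simp: AE_measure_pmf_iff)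
  finally show ?thesis .
qed

lemma circulant_column_norm:
  assumes "0 < N" "b \<in> set_pmf (bernoulli_vec {..<N})"
  shows "(\<Sum>i\<in>\<Omega>. (circulant N b i j)\<^sup>2) = card \<Omega>"
proof -
  have sign: "circulant N b i j \<in> {-1, 1}" for i
    using bernoulli_vec_sign[OF _ assms(2)] \<open>0 < N\<close> by (simp add: circulant_def nat_less_iff)
  have "(circulant N b i j)\<^sup>2 = 1" for i using sign[of i] by auto
  then show ?thesis by simp
qed

lemma toeplitz_column_norm:
  assumes "\<Omega> \<subseteq> {1..N}" "j \<in> {1..N}" "c \<in> set_pmf (bernoulli_vec {-(int N - 1)..int N - 1})"
  shows "(\<Sum>i\<in>\<Omega>. (toeplitz c i j)\<^sup>2) = card \<Omega>"
proof -
  have sign: "toeplitz c i j \<in> {-1, 1}" if "i \<in> \<Omega>" for i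
    unfolding toeplitz_def using assms(1,2) that by (intro bernoulli_vec_sign[OF _ assms(3)]) auto
  have "(toeplitz c i j)\<^sup>2 = 1" if "i \<in> \<Omega>" for i using sign[OF that] by auto
  then show ?thesis by simp
qed

lemma inj_on_circulant_index:
  "inj_on (\<lambda>i. nat ((int j - int i) mod int N)) {1..N}"
proof (rule inj_onI)
  fix x y assume "x \<in> {1..N}" "y \<in> {1..N}"
    and "nat ((int j - int x) mod int N) = nat ((int j - int y) mod int N)"
  then have "(int j - int x) mod int N = (int j - int y) mod int N"
    by (simp add: eq_nat_nat_iff)
  then have "int N dvd int y - int x"
    using mod_eq_dvd_iff[of "int j - int x" "int N" "int j - int y"] by simp
  moreover have "\<bar>int y - int x\<bar> < int N" using \<open>x \<in> {1..N}\<close> \<open>y \<in> {1..N}\<close> by auto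
  ultimately show "x = y"
    using dvd_imp_le_int[of "int y - int x" "int N"] by force
qed

lemma circulant_inner_eq_shift_sum:
  assumes "\<Omega> \<subseteq> {1..N}" "j \<le> k" "0 < N"
  shows "(\<Sum>i\<in>\<Omega>. circulant N b i j * circulant N b i k)
           = (\<Sum>e\<in>(\<lambda>i. nat ((int j - int i) mod int N)) ` \<Omega>. b e * b ((e + (k - j)) mod N))"
proof -
  define m where "m i = nat ((int j - int i) mod int N)" for i
  have shift: "nat ((int k - int i) mod int N) = (m i + (k - j)) mod N" for i
  proof -
    have k_eq: "int k - int i = (int j - int i) + int (k - j)" using assms(2) by simp
    have "(int k - int i) mod int N = ((int j - int i) mod int N + int (k - j)) mod int N"
      by (simp only: k_eq mod_add_left_eq)
    also have "\<dots> = int ((m i + (k - j)) mod N)"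
      using \<open>0 < N\<close> by (simp add: m_def zmod_int)
    finally show ?thesis by simp
  qed
  have "inj_on m \<Omega>"
    unfolding m_def by (rule inj_on_subset[OF inj_on_circulant_index assms(1)])
  then show ?thesis
    by (simp add: circulant_def shift sum.reindex flip: m_def)
qed

lemma prob_circulant_coherence_gt:
  assumes "\<Omega> \<subseteq> {1..N}" "card \<Omega> \<le> n" "0 < n" "j \<in> {1..N}" "k \<in> {1..N}" "j < k" "0 < t"
  shows "measure_pmf.prob (bernoulli_vec {..<N})
           {b. 2 * t < \<bar>\<Sum>i\<in>\<Omega>. circulant N b i j * circulant N b i k\<bar>} \<le> 4 * exp (- t\<^sup>2 / (2 * n))"
proof -
  let ?M = "bernoulli_vec {..<N}"
  define d where "d = k - j"
  define E where "E = (\<lambda>i. nat ((int j - int i) mod int N)) ` \<Omega>"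
  have "0 < N" "0 < d" "d < N" using assms(4-6) by (auto simp: d_def)
  have "finite \<Omega>" using assms(1) finite_subset by blast
  then have "finite E" "card E \<le> n"
    unfolding E_def using assms(2) card_image_le[of \<Omega>] le_trans by blast+
  have "E \<subseteq> {..<N}" using \<open>0 < N\<close> by (auto simp: E_def nat_less_iff)
  text \<open>The terms whose second index \<open>e + d\<close> wraps around modulo \<open>N\<close> form a second chaos,
    in which the fresh variable is the first index.\<close>
  define E_direct where "E_direct = {e \<in> E. e + d < N}"
  define E_wrap where "E_wrap = {e \<in> E. N \<le> e + d}"
  define S_direct where "S_direct b = (\<Sum>e\<in>E_direct. b e * b (e + d))" for b :: "nat \<Rightarrow> real"
  define S_wrap where "S_wrap b = (\<Sum>e\<in>E_wrap. b (e + d - N) * b e)" for b :: "nat \<Rightarrow> real"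
  have split: "(\<Sum>i\<in>\<Omega>. circulant N b i j * circulant N b i k) = S_direct b + S_wrap b" for b
  proof -
    have "(\<Sum>i\<in>\<Omega>. circulant N b i j * circulant N b i k)
            = (\<Sum>e\<in>E_direct. b e * b ((e + d) mod N)) + (\<Sum>e\<in>E_wrap. b e * b ((e + d) mod N))"
      using circulant_inner_eq_shift_sum[OF assms(1) _ \<open>0 < N\<close>, of j k b] assms(6) \<open>finite E\<close>
      by (subst sum.union_disjoint[symmetric])
         (auto simp: E_direct_def E_wrap_def E_def d_def intro: sum.cong)
    also have "\<dots> = S_direct b + S_wrap b"
      using \<open>E \<subseteq> {..<N}\<close> \<open>d < N\<close>
      by (auto simp: S_direct_def S_wrap_def E_direct_def E_wrap_def le_mod_geq mult.commute intro!: sum.cong)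
    finally show ?thesis .
  qed
  have "finite E_direct" "card E_direct \<le> n" "finite E_wrap" "card E_wrap \<le> n"
    using \<open>finite E\<close> \<open>card E \<le> n\<close> card_mono[of E E_direct] card_mono[of E E_wrap]
    by (auto simp: E_direct_def E_wrap_def)
  have "measure_pmf.prob ?M {b. t \<le> \<bar>S_direct b\<bar>} \<le> 2 * exp (- t\<^sup>2 / (2 * n))"
    unfolding S_direct_def using \<open>0 < d\<close> assms(3,7)
    by (intro prob_abs_chaos_ge \<open>finite E_direct\<close> \<open>card E_direct \<le> n\<close>) (auto simp: E_direct_def)
  moreover have "measure_pmf.prob ?M {b. t \<le> \<bar>S_wrap b\<bar>} \<le> 2 * exp (- t\<^sup>2 / (2 * n))"
    unfolding S_wrap_def using \<open>d < N\<close> \<open>E \<subseteq> {..<N}\<close> assms(3,7)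
    by (intro prob_abs_chaos_ge \<open>finite E_wrap\<close> \<open>card E_wrap \<le> n\<close>) (auto simp: E_wrap_def)
  moreover have "{b. 2 * t < \<bar>\<Sum>i\<in>\<Omega>. circulant N b i j * circulant N b i k\<bar>}
                   \<subseteq> {b. t \<le> \<bar>S_direct b\<bar>} \<union> {b. t \<le> \<bar>S_wrap b\<bar>}"
    by (auto simp: split)
  then have "measure_pmf.prob ?M {b. 2 * t < \<bar>\<Sum>i\<in>\<Omega>. circulant N b i j * circulant N b i k\<bar>}
               \<le> measure_pmf.prob ?M {b. t \<le> \<bar>S_direct b\<bar>} + measure_pmf.prob ?M {b. t \<le> \<bar>S_wrap b\<bar>}"
    by (intro order_trans[OF measure_pmf.finite_measure_mono measure_Un_le]) auto
  ultimately show ?thesis by linarith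
qed

lemma prob_toeplitz_coherence_gt:
  assumes "\<Omega> \<subseteq> {1..N}" "card \<Omega> \<le> n" "0 < n" "j \<in> {1..N}" "k \<in> {1..N}" "j < k" "0 < t"
  shows "measure_pmf.prob (bernoulli_vec {-(int N - 1)..int N - 1})
           {c. 2 * t < \<bar>\<Sum>i\<in>\<Omega>. toeplitz c i j * toeplitz c i k\<bar>} \<le> 4 * exp (- t\<^sup>2 / (2 * n))"
proof -
  let ?M = "bernoulli_vec {-(int N - 1)..int N - 1}"
  define E where "E = (\<lambda>i. - int i) ` \<Omega>"
  have inj: "inj_on (\<lambda>i. - int i) \<Omega>" by (auto simp: inj_on_def)
  have "finite \<Omega>" using assms(1) finite_subset by blast
  then have "finite E" "card E \<le> n"
    using assms(2) card_image_le[of \<Omega> "\<lambda>i. - int i"] by (auto simp: E_def)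
  have "(\<Sum>i\<in>\<Omega>. toeplitz c i j * toeplitz c i k) = (\<Sum>e\<in>E. c (int j + e) * c (int k + e))" for c
    by (simp add: toeplitz_def E_def sum.reindex[OF inj])
  then have "{c. 2 * t < \<bar>\<Sum>i\<in>\<Omega>. toeplitz c i j * toeplitz c i k\<bar>}
               \<subseteq> {c. t \<le> \<bar>\<Sum>e\<in>E. c (int j + e) * c (int k + e)\<bar>}"
    using assms(7) by auto
  then have "measure_pmf.prob ?M {c. 2 * t < \<bar>\<Sum>i\<in>\<Omega>. toeplitz c i j * toeplitz c i k\<bar>}
               \<le> measure_pmf.prob ?M {c. t \<le> \<bar>\<Sum>e\<in>E. c (int j + e) * c (int k + e)\<bar>}"
    by (intro measure_pmf.finite_measure_mono) auto
  also have "\<dots> \<le> 2 * exp (- t\<^sup>2 / (2 * n))"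
    using assms by (intro prob_abs_chaos_ge \<open>finite E\<close> \<open>card E \<le> n\<close>) (auto simp: E_def)
  finally show ?thesis
    using exp_ge_zero[of "- t\<^sup>2 / (2 * n)"] by linarith
qed

lemma pair_count_exp_le:
  fixes N :: nat and \<epsilon> :: real
  assumes "0 < \<epsilon>" "\<epsilon> < 1"
  shows "real (N * (N - 1)) * (4 * exp (- 2 * (ln (2 * (real N)\<^sup>2 / \<epsilon>))\<^sup>2)) \<le> \<epsilon>"
proof (cases "N \<le> 1")
  case True
  then show ?thesis using assms by auto
next
  case False
  define L where "L = ln (2 * (real N)\<^sup>2 / \<epsilon>)"
  have exp_L: "exp L = 2 * (real N)\<^sup>2 / \<epsilon>"
    using False assms by (simp add: L_def)
  have "(2::real)\<^sup>2 \<le> (real N)\<^sup>2"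
    using False by (intro power_mono) auto
  then have "8 \<le> exp L"
    using exp_L assms by (simp add: le_divide_eq)
  then have "exp 1 \<le> exp L"
    using e_less_272 by linarith
  then have "1 \<le> L" by simp
  moreover have "L \<le> L\<^sup>2"
    using power_increasing[of 1 2 L] \<open>1 \<le> L\<close> by simp
  ultimately have "exp (L - 2 * L\<^sup>2) \<le> exp (-1)"
    by simp
  also have "exp (-1::real) \<le> 1 / 2"
    using exp_ge_add_one_self[of "1::real"] by (simp add: exp_minus field_simps)
  finally have "exp (L - 2 * L\<^sup>2) \<le> 1 / 2" .
  have "real (N * (N - 1)) \<le> (real N)\<^sup>2"
    unfolding power2_eq_square of_nat_mult[symmetric] by (intro of_nat_mono mult_le_mono2) simp
  then have "real (N * (N - 1)) * (4 * exp (- 2 * L\<^sup>2)) \<le> (real N)\<^sup>2 * (4 * exp (- 2 * L\<^sup>2))"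
    by (intro mult_right_mono) auto
  also have "\<dots> = 2 * \<epsilon> * exp (L - 2 * L\<^sup>2)"
    using exp_L assms by (simp add: exp_diff exp_minus field_simps)
  also have "\<dots> \<le> \<epsilon>"
    using \<open>exp (L - 2 * L\<^sup>2) \<le> 1 / 2\<close> assms by simp
  finally show ?thesis by (simp add: L_def)
qed

lemma sample_size_bounds:
  fixes N n s :: nat and \<epsilon> \<delta> :: real
  assumes "0 < N" "0 < s" "0 < \<epsilon>" "\<epsilon> < 1" "0 < \<delta>"
    and "real n \<ge> 16 * \<delta> powr (-2) * (real s)\<^sup>2 * (ln (2 * (real N)\<^sup>2 / \<epsilon>))\<^sup>2"
  shows "0 < n"
    and "real (N * (N - 1)) * (4 * exp (- (\<delta> * n / (2 * s))\<^sup>2 / (2 * n))) \<le> \<epsilon>"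
proof -
  define L where "L = ln (2 * (real N)\<^sup>2 / \<epsilon>)"
  have "1 \<le> (real N)\<^sup>2"
    using \<open>0 < N\<close> by simp
  then have "1 < 2 * (real N)\<^sup>2 / \<epsilon>"
    using assms(3,4) by (simp add: less_divide_eq)
  then have "0 < L"
    by (simp add: L_def)
  have sample_size: "16 * (real s)\<^sup>2 * L\<^sup>2 \<le> n * \<delta>\<^sup>2"
    using assms(5,6) by (simp add: L_def powr_minus powr_numeral field_simps)
  moreover have "0 < 16 * (real s)\<^sup>2 * L\<^sup>2"
    using \<open>0 < s\<close> \<open>0 < L\<close> by simp
  ultimately have "0 < real n * \<delta>\<^sup>2"
    by linarith
  then show "0 < n"
    by (simp add: zero_less_mult_iff)
  then have "2 * L\<^sup>2 \<le> (\<delta> * n / (2 * s))\<^sup>2 / (2 * n)"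
    using sample_size \<open>0 < s\<close> by (simp add: power2_eq_square field_simps)
  then have "real (N * (N - 1)) * (4 * exp (- (\<delta> * n / (2 * s))\<^sup>2 / (2 * n)))
               \<le> real (N * (N - 1)) * (4 * exp (- 2 * L\<^sup>2))"
    by (intro mult_left_mono) auto
  also have "\<dots> \<le> \<epsilon>"
    using pair_count_exp_le[OF assms(3,4), of N] by (simp add: L_def)
  finally show "real (N * (N - 1)) * (4 * exp (- (\<delta> * n / (2 * s))\<^sup>2 / (2 * n))) \<le> \<epsilon>" .
qed

lemma coherence_threshold:
  fixes n s :: nat and \<delta> x :: real
  assumes "0 < s"
  shows "\<delta> * n < s * x \<longleftrightarrow> 2 * (\<delta> * n / (2 * s)) < x"
  using assms by (simp add: field_simps)

lemma prob_RIC_circulant_ge: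
  fixes n s :: nat and \<delta> :: real
  assumes "\<Omega> \<subseteq> {1..N}" "card \<Omega> = n" "0 < n" "0 < s" "0 < \<delta>"
  shows "1 - real (N * (N - 1)) * (4 * exp (- (\<delta> * n / (2 * s))\<^sup>2 / (2 * n)))
           \<le> measure_pmf.prob (bernoulli_vec {..<N})
               {b. RIC N \<Omega> (\<lambda>i j. circulant N b i j / sqrt (real n)) s \<le> \<delta>}"
proof (rule prob_RIC_normalized_ge[OF \<open>0 < s\<close> _ \<open>0 < n\<close>])
  show "(\<Sum>i\<in>\<Omega>. (circulant N b i j)\<^sup>2) = n"
    if "b \<in> set_pmf (bernoulli_vec {..<N})" "j \<in> {1..N}" for b j
  proof -
    have "0 < N" using that(2) by simp
    then show ?thesis using circulant_column_norm[OF _ that(1)] assms(2) by simp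
  qed
  show "measure_pmf.prob (bernoulli_vec {..<N})
          {b. \<delta> * n < s * \<bar>\<Sum>i\<in>\<Omega>. circulant N b i j * circulant N b i k\<bar>}
          \<le> 4 * exp (- (\<delta> * n / (2 * s))\<^sup>2 / (2 * n))"
    if "j \<in> {1..N}" "k \<in> {1..N}" "j < k" for j k
    unfolding coherence_threshold[OF \<open>0 < s\<close>] using assms
    by (intro prob_circulant_coherence_gt[OF assms(1) _ \<open>0 < n\<close> that]) auto
qed (use assms(5) in auto)

lemma prob_RIC_toeplitz_ge:
  fixes n s :: nat and \<delta> :: real
  assumes "\<Omega> \<subseteq> {1..N}" "card \<Omega> = n" "0 < n" "0 < s" "0 < \<delta>"
  shows "1 - real (N * (N - 1)) * (4 * exp (- (\<delta> * n / (2 * s))\<^sup>2 / (2 * n)))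
           \<le> measure_pmf.prob (bernoulli_vec {-(int N - 1)..int N - 1})
               {c. RIC N \<Omega> (\<lambda>i j. toeplitz c i j / sqrt (real n)) s \<le> \<delta>}"
proof (rule prob_RIC_normalized_ge[OF \<open>0 < s\<close> _ \<open>0 < n\<close>])
  show "(\<Sum>i\<in>\<Omega>. (toeplitz c i j)\<^sup>2) = n"
    if "c \<in> set_pmf (bernoulli_vec {-(int N - 1)..int N - 1})" "j \<in> {1..N}" for c j
    using toeplitz_column_norm[OF assms(1) that(2,1)] assms(2) by simp
  show "measure_pmf.prob (bernoulli_vec {-(int N - 1)..int N - 1})
          {c. \<delta> * n < s * \<bar>\<Sum>i\<in>\<Omega>. toeplitz c i j * toeplitz c i k\<bar>}
          \<le> 4 * exp (- (\<delta> * n / (2 * s))\<^sup>2 / (2 * n))"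
    if "j \<in> {1..N}" "k \<in> {1..N}" "j < k" for j k
    unfolding coherence_threshold[OF \<open>0 < s\<close>] using assms
    by (intro prob_toeplitz_coherence_gt[OF assms(1) _ \<open>0 < n\<close> that]) auto
qed (use assms(5) in auto)

theorem corollary4:
  fixes N n s :: nat and \<Omega> :: "nat set" and \<epsilon> \<delta> :: real
  assumes "\<Omega> \<subseteq> {1..N}" and "card \<Omega> = n"
    and "0 < \<epsilon>" and "\<epsilon> < 1" and "\<delta> > 0"
    and "real n \<ge> 16 * \<delta> powr (-2) * (real s)\<^sup>2 * (ln (2 * (real N)\<^sup>2 / \<epsilon>))\<^sup>2"
  shows "measure_pmf.prob (bernoulli_vec {..<N})
            {b. RIC N \<Omega> (\<lambda>i j. circulant N b i j / sqrt (real n)) s \<le> \<delta>} \<ge> 1 - \<epsilon> \<and>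
         measure_pmf.prob (bernoulli_vec {-(int N - 1)..int N - 1})
            {c. RIC N \<Omega> (\<lambda>i j. toeplitz c i j / sqrt (real n)) s \<le> \<delta>} \<ge> 1 - \<epsilon>"
proof (cases "s = 0 \<or> N = 0")
  case True
  then show ?thesis using RIC_le_degenerate[OF True] assms(3,5) by simp
next
  case False
  then have "0 < s" "0 < N" by auto
  note sample_size = sample_size_bounds[OF \<open>0 < N\<close> \<open>0 < s\<close> assms(3-6)]
  show ?thesis
    using prob_RIC_circulant_ge[OF assms(1,2) sample_size(1) \<open>0 < s\<close> assms(5)]
      prob_RIC_toeplitz_ge[OF assms(1,2) sample_size(1) \<open>0 < s\<close> assms(5)] sample_size(2)
    by linarith
qed

end
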